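(* Let $a,b,h\in\mathbb{R}$ with $h>0$ and $\frac{b-a}{h}\in\mathbb{N}\setminus\{1\}$, let $\gamma,A\ge0$ and $\mu=\frac{4}{h^2}\sin^2\big(\frac{\pi h}{4(b-a)}\big)$. Then the problem $$-D_h^+D_h^-v(x)=\mu v(x)-A\ \ (x\in(a,b)_h),\qquad v(a)=\gamma,\ v(b)=0,$$ has the unique solution $$v(x)=\Big(\gamma-\frac{A}{\mu}\Big)\cos\Big(\frac{\pi(x-a)}{2(b-a)}\Big)-\frac{A}{\mu}\sin\Big(\frac{\pi(x-a)}{2(b-a)}\Big)+\frac{A}{\mu},\quad x\in[a,b]_h,$$ and it satisfies $-D_h^+v(a)\le\big(\gamma+(b-a)^2A\big)\frac{\pi}{2(b-a)}$.
   Context: $[a,b]_h=[a,b]\cap(a+h\mathbb{Z})$, $(a,b)_h=(a,b)\cap(a+h\mathbb{Z})$. $D_h^+v(x)=\frac{v(x+h)-v(x)}{h}$, $D_h^-v(x)=\frac{v(x)-v(x-h)}{h}$. *)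

theory Defs
  imports Complex_Main
begin

definition grid_cc :: "real \<Rightarrow> real \<Rightarrow> real \<Rightarrow> real set" where
  "grid_cc a b h = {x. a \<le> x \<and> x \<le> b \<and> (\<exists>k::int. x = a + of_int k * h)}"

definition grid_oo :: "real \<Rightarrow> real \<Rightarrow> real \<Rightarrow> real set" where
  "grid_oo a b h = {x. a < x \<and> x < b \<and> (\<exists>k::int. x = a + of_int k * h)}"

definition Dplus :: "real \<Rightarrow> (real \<Rightarrow> real) \<Rightarrow> real \<Rightarrow> real" where
  "Dplus h v x = (v (x + h) - v x) / h"

definition Dminus :: "real \<Rightarrow> (real \<Rightarrow> real) \<Rightarrow> real \<Rightarrow> real" where
  "Dminus h v x = (v x - v (x - h)) / h"

definition solves_bvp :: "real \<Rightarrow> real \<Rightarrow> real \<Rightarrow> real \<Rightarrow> real \<Rightarrow> real \<Rightarrow> (real \<Rightarrow> real) \<Rightarrow> bool" where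
  "solves_bvp a b h \<mu> A \<gamma> v \<longleftrightarrow>
     (\<forall>x\<in>grid_oo a b h. - Dplus h (Dminus h v) x = \<mu> * v x - A) \<and> v a = \<gamma> \<and> v b = 0"

end

theory Submission
  imports Defs
begin

(*
  Put omega = pi/(2(b-a)) and theta = omega h = pi/(2N). The choice of mu means
  mu h^2 = 2 - 2 cos theta, so every function p cos(omega(x-a)) + q sin(omega(x-a)) + A/mu
  satisfies the difference equation, and the boundary values determine p and q, the phase at
  x = b being pi/2. The difference u of two solutions, read off on the grid, obeys
  u(k+1) = 2 cos theta u(k) - u(k-1) with u(0) = 0, hence u(k) = u(1) sin(k theta)/sin theta;
  since sin(N theta) = 1, u(N) = 0 forces u = 0. For the slope bound,
  -D+v(a) = (gamma (1 - cos theta) + (A/mu)(sin theta - 1 + cos theta))/h <= (gamma + A/mu) omega,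
  and A/mu <= (b-a)^2 A because sin y >= 2y/pi on [0,1] gives mu >= 1/(b-a)^2.
*)

lemma Dplus_Dminus:
  "h \<noteq> 0 \<Longrightarrow> Dplus h (Dminus h f) x = (f (x + h) - 2 * f x + f (x - h)) / h\<^sup>2"
  unfolding Dplus_def Dminus_def by (simp add: field_simps power2_eq_square)

lemma sinusoid_eigenfunction:
  fixes \<alpha> \<beta> \<omega> a c h x :: real
  assumes "h \<noteq> 0"
  defines "f \<equiv> \<lambda>x. \<alpha> * cos (\<omega> * (x - a)) + \<beta> * sin (\<omega> * (x - a)) + c"
  shows "- Dplus h (Dminus h f) x = 4 / h\<^sup>2 * (sin (\<omega> * h / 2))\<^sup>2 * (f x - c)"
proof -
  have "- (f (x + h) - 2 * f x + f (x - h)) = (2 - 2 * cos (\<omega> * h)) * (f x - c)"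
    unfolding f_def
    by (simp add: sin_add sin_diff cos_add cos_diff algebra_simps)
  also have "2 - 2 * cos (\<omega> * h) = 4 * (sin (\<omega> * h / 2))\<^sup>2"
    using cos_double_sin[of "\<omega> * h / 2"] by simp
  finally show ?thesis
    unfolding Dplus_Dminus[OF assms(1)] minus_divide_left by simp
qed

lemma sinusoid_solves_bvp:
  assumes "h \<noteq> 0" "\<mu> \<noteq> 0" "\<mu> = 4 / h\<^sup>2 * (sin (\<omega> * h / 2))\<^sup>2" "\<omega> * (b - a) = pi / 2"
  shows "solves_bvp a b h \<mu> A \<gamma>
           (\<lambda>x. (\<gamma> - A / \<mu>) * cos (\<omega> * (x - a)) - A / \<mu> * sin (\<omega> * (x - a)) + A / \<mu>)"
    (is "solves_bvp a b h \<mu> A \<gamma> ?v")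
proof -
  have "?v = (\<lambda>x. (\<gamma> - A / \<mu>) * cos (\<omega> * (x - a)) + (- A / \<mu>) * sin (\<omega> * (x - a)) + A / \<mu>)"
    by simp
  then have "- Dplus h (Dminus h ?v) x = \<mu> * (?v x - A / \<mu>)" for x
    using sinusoid_eigenfunction[OF assms(1), of "\<gamma> - A / \<mu>" \<omega> a "- A / \<mu>" "A / \<mu>" x] assms(3)
    by simp
  also have "\<mu> * (?v x - A / \<mu>) = \<mu> * ?v x - A" for x
    using assms(2) by (simp add: field_simps)
  finally show ?thesis
    unfolding solves_bvp_def by (simp add: assms(4))
qed

lemma sin_three_term_recurrence:
  fixes t \<theta> :: real
  shows "sin (t + \<theta>) = 2 * cos \<theta> * sin t - sin (t - \<theta>)"
  by (simp add: sin_add sin_diff algebra_simps)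

lemma three_term_recurrence_solution:
  fixes u :: "nat \<Rightarrow> real"
  assumes u0: "u 0 = 0" and sin_nz: "sin \<theta> \<noteq> 0"
    and rec: "\<And>k. k + 2 \<le> n \<Longrightarrow> u (k + 2) = 2 * cos \<theta> * u (k + 1) - u k"
    and "k \<le> n"
  shows "u k = u 1 / sin \<theta> * sin (real k * \<theta>)"
proof -
  define d where "d = u 1 / sin \<theta>"
  have "u k = d * sin (real k * \<theta>) \<and> u (Suc k) = d * sin (real (Suc k) * \<theta>)"
    if "Suc k \<le> n" for k
    using that
  proof (induction k)
    case 0
    show ?case using u0 sin_nz by (simp add: d_def)
  next
    case (Suc k)
    then have IH: "u k = d * sin (real k * \<theta>)" "u (Suc k) = d * sin (real (Suc k) * \<theta>)"
      by simp_all
    have "u (Suc (Suc k)) = d * (2 * cos \<theta> * sin (real (Suc k) * \<theta>) - sin (real k * \<theta>))"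
      using rec[of k] Suc.prems IH by (simp add: algebra_simps)
    also have "2 * cos \<theta> * sin (real (Suc k) * \<theta>) - sin (real k * \<theta>) = sin (real (Suc (Suc k)) * \<theta>)"
      using sin_three_term_recurrence[of "real (Suc k) * \<theta>" \<theta>] by (simp add: algebra_simps)
    finally show ?case using IH by simp
  qed
  from this[of "k - 1"] this[of k] \<open>k \<le> n\<close> show ?thesis
    by (cases "k = 0") (auto simp: d_def u0 le_Suc_eq)
qed

lemma three_term_recurrence_dirichlet_zero:
  fixes u :: "nat \<Rightarrow> real"
  assumes "u 0 = 0" "u n = 0" "sin \<theta> \<noteq> 0" "sin (real n * \<theta>) \<noteq> 0"
    and "\<And>k. k + 2 \<le> n \<Longrightarrow> u (k + 2) = 2 * cos \<theta> * u (k + 1) - u k"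
    and "k \<le> n"
  shows "u k = 0"
proof -
  have "u 1 = 0"
    using three_term_recurrence_solution[of u \<theta> n n] assms by simp
  then show ?thesis
    using three_term_recurrence_solution[of u \<theta> n k] assms by simp
qed

lemma grid_cc_eq:
  assumes "h > 0" "b = a + real n * h"
  shows "grid_cc a b h = {a + real k * h | k. k \<le> n}"
proof (intro set_eqI iffI)
  fix x assume "x \<in> grid_cc a b h"
  then obtain k :: int where k: "a \<le> x" "x \<le> b" "x = a + of_int k * h"
    unfolding grid_cc_def by blast
  with assms have "0 \<le> k" "of_int k \<le> real n"
    by (simp_all add: zero_le_mult_iff)
  with k show "x \<in> {a + real k * h | k. k \<le> n}"
    by (intro CollectI exI[of _ "nat k"]) (simp add: nat_le_iff of_nat_le_iff[symmetric])
next
  fix x assume "x \<in> {a + real k * h | k. k \<le> n}"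
  then obtain k where "k \<le> n" "x = a + real k * h" by blast
  with assms show "x \<in> grid_cc a b h"
    unfolding grid_cc_def by (auto intro!: exI[of _ "int k"] mult_right_mono)
qed

lemma grid_oo_interior_node:
  assumes "h > 0" "b = a + real n * h" "0 < k" "k < n"
  shows "a + real k * h \<in> grid_oo a b h"
  using assms unfolding grid_oo_def by (auto intro!: exI[of _ "int k"])

lemma solves_bvp_unique:
  assumes h: "h > 0" and b: "b = a + real n * h"
    and \<mu>: "\<mu> * h\<^sup>2 = 2 - 2 * cos \<theta>" and "sin \<theta> \<noteq> 0" "sin (real n * \<theta>) \<noteq> 0"
    and v: "solves_bvp a b h \<mu> A \<gamma> v" and w: "solves_bvp a b h \<mu> A \<gamma> w"
    and x: "x \<in> grid_cc a b h"
  shows "w x = v x"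
proof -
  define u where "u k = w (a + real k * h) - v (a + real k * h)" for k
  have "u (k + 2) = 2 * cos \<theta> * u (k + 1) - u k" if "k + 2 \<le> n" for k
  proof -
    define y where "y = a + real (k + 1) * h"
    have "y \<in> grid_oo a b h"
      unfolding y_def using grid_oo_interior_node[OF h b, of "k + 1"] that by simp
    then have "- Dplus h (Dminus h w) y + Dplus h (Dminus h v) y = \<mu> * (w y - v y)"
      using v w unfolding solves_bvp_def by (simp add: algebra_simps)
    then have "((w (y + h) - 2 * w y + w (y - h)) - (v (y + h) - 2 * v y + v (y - h))) / h\<^sup>2
        = - \<mu> * (w y - v y)"
      unfolding Dplus_Dminus[OF less_imp_neq[OF h, symmetric]] by (simp add: diff_divide_distrib)
    then have "(w (y + h) - 2 * w y + w (y - h)) - (v (y + h) - 2 * v y + v (y - h))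
        = - \<mu> * (w y - v y) * h\<^sup>2"
      using h by (subst (asm) divide_eq_eq) simp
    moreover have "y + h = a + real (k + 2) * h" "y - h = a + real k * h"
      unfolding y_def by (simp_all add: algebra_simps)
    ultimately have "u (k + 2) - 2 * u (k + 1) + u k = - (\<mu> * h\<^sup>2) * u (k + 1)"
      unfolding u_def y_def by (simp add: algebra_simps)
    then show ?thesis unfolding \<mu> by (simp add: algebra_simps)
  qed
  moreover have "u 0 = 0" "u n = 0"
    using v w b unfolding solves_bvp_def u_def by simp_all
  moreover obtain k where "k \<le> n" "x = a + real k * h"
    using x grid_cc_eq[OF h b] by blast
  ultimately show ?thesis
    using three_term_recurrence_dirichlet_zero[of u n \<theta> k] assms unfolding u_def by simp
qed

lemma one_minus_cos_le:
  fixes \<theta> :: real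
  assumes "0 \<le> \<theta>" "\<theta> \<le> 2"
  shows "1 - cos \<theta> \<le> \<theta>"
proof -
  have "1 - cos \<theta> = 2 * (sin (\<theta> / 2))\<^sup>2"
    using cos_double_sin[of "\<theta> / 2"] by simp
  also have "\<dots> \<le> 2 * (\<theta> / 2)\<^sup>2"
    using assms sin_x_le_x[of "\<theta> / 2"] sin_ge_zero[of "\<theta> / 2"] pi_ge_two
    by (intro mult_left_mono power_mono) auto
  also have "\<dots> \<le> \<theta>"
    using assms by (simp add: power2_eq_square field_simps mult_left_mono)
  finally show ?thesis .
qed

lemma sinusoid_left_difference_bound:
  fixes h \<omega> \<gamma> c a :: real
  assumes "0 < h" "0 \<le> \<omega> * h" "\<omega> * h \<le> 2" "0 \<le> \<gamma>" "0 \<le> c"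
  shows "- Dplus h (\<lambda>x. (\<gamma> - c) * cos (\<omega> * (x - a)) - c * sin (\<omega> * (x - a)) + c) a
           \<le> (\<gamma> + c) * \<omega>"
proof -
  define \<theta> where "\<theta> = \<omega> * h"
  have \<theta>: "0 \<le> \<theta>" "\<theta> \<le> 2"
    using assms unfolding \<theta>_def by auto
  have "- Dplus h (\<lambda>x. (\<gamma> - c) * cos (\<omega> * (x - a)) - c * sin (\<omega> * (x - a)) + c) a
          = (\<gamma> * (1 - cos \<theta>) + c * (sin \<theta> - (1 - cos \<theta>))) / h"
    unfolding Dplus_def \<theta>_def by (simp add: algebra_simps minus_divide_left)
  also have "\<dots> \<le> (\<gamma> * \<theta> + c * \<theta>) / h"
  proof (intro divide_right_mono add_mono mult_left_mono)
    show "1 - cos \<theta> \<le> \<theta>"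
      using \<theta> by (rule one_minus_cos_le)
    show "sin \<theta> - (1 - cos \<theta>) \<le> \<theta>"
      using sin_x_le_x[OF \<theta>(1)] cos_le_one[of \<theta>] by linarith
  qed (use assms in auto)
  also have "\<dots> = (\<gamma> + c) * \<omega>"
    using assms unfolding \<theta>_def by (simp add: field_simps)
  finally show ?thesis .
qed

lemma three_le_pi: "3 \<le> pi"
  using sin_x_le_x[of "pi / 6"] by (simp add: sin_30)

lemma two_div_pi_mult_le_sin:
  fixes y :: real
  assumes "0 \<le> y" "y \<le> 1"
  shows "2 / pi * y \<le> sin y"
proof -
  have "\<bar>sin y - (\<Sum>m<3. sin_coeff m * y ^ m)\<bar> \<le> inverse (fact 3) * \<bar>y\<bar> ^ 3"
    by (rule Maclaurin_sin_bound)
  then have "\<bar>sin y - y\<bar> \<le> y ^ 3 / 6"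
    using assms by (simp add: sin_coeff_def numeral_3_eq_3 lessThan_Suc fact_numeral)
  then have "y - y ^ 3 / 6 \<le> sin y"
    by linarith
  moreover have "y ^ 3 \<le> y ^ 1"
    using assms by (intro power_decreasing) auto
  moreover have "2 / pi * y \<le> 2 / 3 * y"
    using assms three_le_pi by (intro mult_right_mono) (auto simp: field_simps)
  ultimately show ?thesis using assms by simp
qed

lemma inverse_square_le_discrete_eigenvalue:
  fixes h L :: real
  assumes "0 < h" "h \<le> L"
  shows "1 / L\<^sup>2 \<le> 4 / h\<^sup>2 * (sin (pi * h / (4 * L)))\<^sup>2"
proof -
  have "pi * h \<le> 4 * L"
    using assms pi_less_4 mult_right_mono[of pi 4 h] by linarith
  then have "2 / pi * (pi * h / (4 * L)) \<le> sin (pi * h / (4 * L))"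
    using assms by (intro two_div_pi_mult_le_sin) auto
  then have "(h / (2 * L))\<^sup>2 \<le> (sin (pi * h / (4 * L)))\<^sup>2"
    using assms by (intro power_mono) auto
  then have "4 / h\<^sup>2 * (h / (2 * L))\<^sup>2 \<le> 4 / h\<^sup>2 * (sin (pi * h / (4 * L)))\<^sup>2"
    by (intro mult_left_mono) auto
  then show ?thesis
    using assms by (simp add: power2_eq_square)
qed

definition quarter_wave :: "real \<Rightarrow> real \<Rightarrow> real \<Rightarrow> real \<Rightarrow> real \<Rightarrow> real" where
  "quarter_wave a b \<gamma> c x =
     (\<gamma> - c) * cos (pi * (x - a) / (2 * (b - a))) - c * sin (pi * (x - a) / (2 * (b - a))) + c"

lemma quarter_wave_eq_sinusoid:
  "quarter_wave a b \<gamma> c =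
     (\<lambda>x. (\<gamma> - c) * cos (pi / (2 * (b - a)) * (x - a)) - c * sin (pi / (2 * (b - a)) * (x - a)) + c)"
  by (simp add: fun_eq_iff quarter_wave_def)

locale quarter_wave_problem =
  fixes a b h \<mu> :: real and n :: nat
  assumes h_pos: "0 < h" and n_pos: "0 < n" and b_eq: "b = a + real n * h"
    and \<mu>_eq: "\<mu> = 4 / h\<^sup>2 * (sin (pi * h / (4 * (b - a))))\<^sup>2"
begin

lemma length_pos: "0 < b - a" and step_le_length: "h \<le> b - a"
  using h_pos n_pos b_eq by simp_all

lemma \<mu>_eq_sin_half_step: "\<mu> = 4 / h\<^sup>2 * (sin (pi / (2 * (b - a)) * h / 2))\<^sup>2"
  unfolding \<mu>_eq by (simp add: field_simps)

lemma frequency_mult_length: "pi / (2 * (b - a)) * (b - a) = pi / 2"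
proof -
  have cancel: "pi / (2 * L) * L = pi / 2" if "L \<noteq> 0" for L :: real
    using that by simp
  show ?thesis
    using length_pos by (intro cancel) simp
qed

lemma frequency_mult_step: "pi / (2 * (b - a)) * h = pi / (2 * real n)"
  using h_pos b_eq by (simp add: field_simps)

lemma step_angle_pos: "0 < pi / (2 * real n)" and step_angle_le: "pi / (2 * real n) \<le> pi / 2"
  using n_pos divide_left_mono[of 2 "2 * real n" pi] by simp_all

lemma \<mu>_mult_step_square: "\<mu> * h\<^sup>2 = 2 - 2 * cos (pi / (2 * real n))"
proof -
  have "2 * (pi * h / (4 * L)) = pi / (2 * L) * h" for L :: real
    by simp
  then have "pi / (2 * real n) = 2 * (pi * h / (4 * (b - a)))"
    unfolding frequency_mult_step[symmetric] by (rule sym)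
  then show ?thesis
    unfolding \<mu>_eq using h_pos by (simp only: cos_double_sin) simp
qed

lemma inverse_length_square_le_\<mu>: "1 / (b - a)\<^sup>2 \<le> \<mu>"
  unfolding \<mu>_eq by (rule inverse_square_le_discrete_eigenvalue[OF h_pos step_le_length])

lemma \<mu>_pos: "0 < \<mu>"
  using length_pos by (intro less_le_trans[OF _ inverse_length_square_le_\<mu>]) simp

lemma quarter_wave_solves_bvp: "solves_bvp a b h \<mu> A \<gamma> (quarter_wave a b \<gamma> (A / \<mu>))"
  unfolding quarter_wave_eq_sinusoid
  using h_pos \<mu>_pos \<mu>_eq_sin_half_step frequency_mult_length by (intro sinusoid_solves_bvp) auto

lemma solves_bvp_eq_quarter_wave:
  assumes "solves_bvp a b h \<mu> A \<gamma> w" "x \<in> grid_cc a b h"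
  shows "w x = quarter_wave a b \<gamma> (A / \<mu>) x"
proof (rule solves_bvp_unique[OF h_pos b_eq \<mu>_mult_step_square _ _ quarter_wave_solves_bvp assms])
  show "sin (pi / (2 * real n)) \<noteq> 0"
    using step_angle_pos step_angle_le sin_gt_zero[of "pi / (2 * real n)"] pi_gt_zero by linarith
  show "sin (real n * (pi / (2 * real n))) \<noteq> 0"
    using n_pos by simp
qed

lemma quarter_wave_slope_bound:
  assumes "0 \<le> \<gamma>" "0 \<le> A"
  shows "- Dplus h (quarter_wave a b \<gamma> (A / \<mu>)) a \<le> (\<gamma> + (b - a)\<^sup>2 * A) * (pi / (2 * (b - a)))"
proof -
  have "- Dplus h (quarter_wave a b \<gamma> (A / \<mu>)) a \<le> (\<gamma> + A / \<mu>) * (pi / (2 * (b - a)))"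
    unfolding quarter_wave_eq_sinusoid
    using assms h_pos \<mu>_pos frequency_mult_step step_angle_pos step_angle_le pi_less_4
    by (intro sinusoid_left_difference_bound) auto
  also have "1 / \<mu> \<le> (b - a)\<^sup>2"
    using le_imp_inverse_le[OF inverse_length_square_le_\<mu>] length_pos
    by (simp add: inverse_eq_divide)
  from mult_right_mono[OF this assms(2)] have "A / \<mu> \<le> (b - a)\<^sup>2 * A"
    by simp
  then have "(\<gamma> + A / \<mu>) * (pi / (2 * (b - a))) \<le> (\<gamma> + (b - a)\<^sup>2 * A) * (pi / (2 * (b - a)))"
    using length_pos by (intro mult_right_mono) auto
  finally show ?thesis .
qed

end

theorem mainTheorem11:
  fixes a b h \<gamma> A \<mu> :: real
  assumes hpos: "h > 0"
    and N: "\<exists>N::nat. N \<noteq> 1 \<and> N \<ge> 1 \<and> (b - a) / h = real N"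
    and gam: "\<gamma> \<ge> 0" and Apos: "A \<ge> 0"
    and mu: "\<mu> = 4 / h\<^sup>2 * (sin (pi * h / (4 * (b - a))))\<^sup>2"
  shows "let v = (\<lambda>x. (\<gamma> - A / \<mu>) * cos (pi * (x - a) / (2 * (b - a)))
                     - A / \<mu> * sin (pi * (x - a) / (2 * (b - a))) + A / \<mu>)
         in solves_bvp a b h \<mu> A \<gamma> v
            \<and> (\<forall>w. solves_bvp a b h \<mu> A \<gamma> w \<longrightarrow> (\<forall>x\<in>grid_cc a b h. w x = v x))
            \<and> - Dplus h v a \<le> (\<gamma> + (b - a)\<^sup>2 * A) * (pi / (2 * (b - a)))"
proof -
  obtain n :: nat where "0 < n" "b = a + real n * h"
    using N hpos by (auto simp: field_simps)
  then interpret quarter_wave_problem a b h \<mu> n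
    using hpos mu by unfold_locales
  show ?thesis
    using quarter_wave_solves_bvp solves_bvp_eq_quarter_wave quarter_wave_slope_bound[OF gam Apos]
    unfolding Let_def quarter_wave_def[abs_def] by blast
qed

end
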